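(* (1) There is a one-to-one correspondence between finite positive integral frieze patterns of width $2n$ with principal growth coefficient $0$ and positive integral friezes on $P_n^\star$ where $\star$ has order $2$. (2) There is a one-to-one correspondence between finite positive integral frieze patterns of width $3n$ with principal growth coefficient $1$ and positive integral friezes on $P_n^\star$ where $\star$ has order $3$.
   Context: A finite positive integral frieze pattern of width $N$ is a function $F$ on $\{0\le j-i\le N\}$ with $F(i,i)=F(i,i+N)=0$, $F(i,i+1)=F(i,i+N-1)=1$, $F(i,j)F(i+1,j+1)-F(i+1,j)F(i,j+1)=1$ whenever defined, and positive integer entries for $0<j-i<N$. With quiddity $a_i=F(i-1,i+1)$, extend $F$ to all $j\ge i$ by $F(i,i)=0$, $F(i,i+1)=1$, $F(i,j+1)=a_jF(i,j)-F(i,j-1)$ (the tame extension); if $p$ is the minimal period of $(a_i)$, the principal growth coefficient is $F(i,i+p+1)-F(i+1,i+p)$, independent of $i$. Let $\lambda_p=2\cos(\pi/p)$. $P_n^\star$ is a polygon with vertices $v_0,\ldots,v_{n-1}$ and an interior orbifold point $\star$ of order $p$ (the quotient of $P_{pn}$ by rotation through $2\pi/p$). Its arcs are standard arcs $(v_i,v_j)$, $i\ne j$, from $v_i$ to $v_j$ with $v_{i+1},\ldots,v_{j-1}$ on the side not containing $\star$ (boundary segments when $j=i+1$), and pending arcs $(v_i,v_i)$, loops at $v_i$ cutting out a monogon containing $\star$. A frieze on $P_n^\star$ is a function $f$ from arcs to an integral domain with $f=1$ on boundary segments and respecting skein relations: for crossing arcs $\tau,\tau'$, $f(\tau)f(\tau')=f(\Gamma^+)+f(\Gamma^-)$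 where $\Gamma^\pm$ are obtained by the two smoothings of a crossing, $f$ multiplicative on multicurves, self-crossings smoothed recursively, contractible closed curves valued $-2$ and closed curves around $\star$ valued $\lambda_p$ (so $f(v_i,v_i)f(v_j,v_j)=f(v_i,v_j)^2+\lambda_pf(v_i,v_j)f(v_j,v_i)+f(v_j,v_i)^2$ for distinct pending arcs). It is positive integral if all its values are positive integers. *)

theory Defs
  imports Complex_Main
begin

text \<open>F is a function int => int => int;
  only the values on the domain 0 <= j - i <= N are meaningful, and we normalise F to be 0
  outside that domain so that distinct friezes are distinct functions.\<close>
definition finite_frieze :: "nat \<Rightarrow> (int \<Rightarrow> int \<Rightarrow> int) \<Rightarrow> bool" where
  "finite_frieze N F \<longleftrightarrow>
     (\<forall>i j. \<not> (0 \<le> j - i \<and> j - i \<le> int N) \<longrightarrow> F i j = 0) \<and>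
     (\<forall>i. F i i = 0 \<and> F i (i + int N) = 0 \<and> F i (i + 1) = 1 \<and> F i (i + int N - 1) = 1) \<and>
     (\<forall>i j. i + 1 \<le> j \<and> j \<le> i + int N - 1 \<longrightarrow>
            F i j * F (i + 1) (j + 1) - F (i + 1) j * F i (j + 1) = 1) \<and>
     (\<forall>i j. 0 < j - i \<and> j - i < int N \<longrightarrow> F i j > 0)"

definition quiddity :: "(int \<Rightarrow> int \<Rightarrow> int) \<Rightarrow> int \<Rightarrow> int" where
  "quiddity F i = F (i - 1) (i + 1)"

text \<open>Tame extension: tame_ext a i k = F(i, i+k), with F(i,i)=0, F(i,i+1)=1,
  F(i,j+1) = a_j F(i,j) - F(i,j-1).\<close>
fun tame_ext :: "(int \<Rightarrow> int) \<Rightarrow> int \<Rightarrow> nat \<Rightarrow> int" where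
  "tame_ext a i 0 = 0"
| "tame_ext a i (Suc 0) = 1"
| "tame_ext a i (Suc (Suc k)) = a (i + int k + 1) * tame_ext a i (Suc k) - tame_ext a i k"

definition min_period :: "(int \<Rightarrow> int) \<Rightarrow> nat" where
  "min_period a = (LEAST p. 0 < p \<and> (\<forall>i. a (i + int p) = a i))"

text \<open>Principal growth coefficient F(i,i+p+1) - F(i+1,i+p) (taken at i = 0).\<close>
definition principal_growth :: "(int \<Rightarrow> int \<Rightarrow> int) \<Rightarrow> int" where
  "principal_growth F =
     (let a = quiddity F; p = min_period a
      in tame_ext a 0 (p + 1) - tame_ext a 1 (p - 1))"

definition lambda_p :: "nat \<Rightarrow> real" where
  "lambda_p p = 2 * cos (pi / real p)"

text \<open>Arcs of P_n^star: the pair (i,j) with i,j < n stands for the arc (v_i,v_j)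
  (standard if i ~= j, boundary segment if j = i+1 mod n, pending if i = j).

  Curves are handled through the p-fold orbifold cover P_{pn} (vertices = integers mod pn,
  the vertex x lying over v_(x mod n)).  star_curve_val p n f x y is the value of the image
  in P_n^star of the straight segment from x to y in P_{pn}:
  if 0 < (y-x) mod pn <= n it is the arc (v_x, v_y); if it is >= (p-1)n it is the arc
  (v_y, v_x); otherwise (only possible for p = 3) it is a curve with exactly one
  self-crossing, whose recursive smoothing gives lambda_p f(v_x,v_y) + f(v_y,v_x).
  This description of the self-crossing curves is valid for p in {2,3} only.\<close>
definition star_curve_val :: "nat \<Rightarrow> nat \<Rightarrow> (nat \<Rightarrow> nat \<Rightarrow> int) \<Rightarrow> int \<Rightarrow> int \<Rightarrow> real" where
  "star_curve_val p n f x y =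
     (let d = (y - x) mod (int p * int n); i = nat (x mod int n); j = nat (y mod int n)
      in if d \<le> int n then real_of_int (f i j)
         else if d \<ge> (int p - 1) * int n then real_of_int (f j i)
         else lambda_p p * real_of_int (f i j) + real_of_int (f j i))"

text \<open>Lifted arc: the segment from x to y (0 < y - x < pn) is (the lift of) an arc of P_n^star.\<close>
definition star_is_arc :: "nat \<Rightarrow> nat \<Rightarrow> int \<Rightarrow> bool" where
  "star_is_arc p n d \<longleftrightarrow> d \<le> int n \<or> d \<ge> (int p - 1) * int n"

text \<open>Skein relations: every crossing of two arcs of P_n^star lifts to a crossing of two
  diagonals (a,c), (b,d) of P_{pn} with a < b < c < d < a + pn; the two smoothings give
  the (images of the) pairs (a,b),(c,d) and (a,d),(b,c).\<close>
definition star_skein :: "nat \<Rightarrow> nat \<Rightarrow> (nat \<Rightarrow> nat \<Rightarrow> int) \<Rightarrow> bool" where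
  "star_skein p n f \<longleftrightarrow>
     (\<forall>a b c d. a < b \<and> b < c \<and> c < d \<and> d < a + int p * int n \<and>
        star_is_arc p n (c - a) \<and> star_is_arc p n (d - b) \<longrightarrow>
        star_curve_val p n f a c * star_curve_val p n f b d =
          star_curve_val p n f a b * star_curve_val p n f c d
          + star_curve_val p n f a d * star_curve_val p n f b c)"

definition star_frieze :: "nat \<Rightarrow> nat \<Rightarrow> (nat \<Rightarrow> nat \<Rightarrow> int) \<Rightarrow> bool" where
  "star_frieze p n f \<longleftrightarrow>
     (\<forall>i j. \<not> (i < n \<and> j < n) \<longrightarrow> f i j = 0) \<and>
     (\<forall>i < n. f i (Suc i mod n) = 1) \<and>
     (\<forall>i j. i < n \<and> j < n \<longrightarrow> f i j > 0) \<and>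
     star_skein p n f"

end

theory Submission
  imports Defs
begin

text \<open>
  A finite frieze pattern F of width N is the continuant of its quiddity a: F x y = cont a x y,
  the determinant of two solutions of w (j + 1) = a j * w j - w (j - 1). The frieze is then
  antiperiodic, cont a (x + N) y = - cont a x y, so a is N-periodic. If q is the minimal period
  of a and N = k q, the values cont a 0 (m q) form a Chebyshev sequence in the principal growth
  coefficient t which is positive for 0 < m < k and vanishes at m = k; this leaves only
  (k, t) = (1, -2), (2, 0), (3, 1). Hence growth p - 2 for p = 2, 3 forces q = n, and then
  cont a x (y + n) + cont a x (y - n) = (p - 2) cont a x y.

  Reading F on the p-fold cover P_{pn} of P_n^star gives a function on the arcs of P_n^star. Its
  skein relations are Pluecker relations for cont, and for p = 3 the value
  lambda_3 f(v_i,v_j) + f(v_j,v_i) of a self-crossing curve is an instance of the trace relation.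
  Conversely, a frieze on P_n^star lifts to the segments of P_{pn}; on segments of length at most
  n its skein relations are the unimodular rule, so there it is the continuant of an n-periodic
  quiddity with trace p - 2, and the trace relation extends this to all segments.
\<close>

section \<open>Three-term recurrences and continuants\<close>

lemma periodic_mult:
  fixes a :: "int \<Rightarrow> 'a"
  assumes "\<And>j. a (j + q) = a j"
  shows "a (j + q * c) = a j"
proof (induction c arbitrary: j rule: int_induct[where k = 0])
  case (step1 c)
  have "a (j + q * (c + 1)) = a ((j + q * c) + q)" by (simp add: algebra_simps)
  with step1 assms show ?case by simp
next
  case (step2 c)
  have "a (j + q * (c - 1)) = a ((j + q * (c - 1)) + q)" by (rule assms[symmetric])
  also have "(j + q * (c - 1)) + q = j + q * c" by (simp add: algebra_simps)
  finally show ?case using step2 by simp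
qed simp

definition solves :: "(int \<Rightarrow> int) \<Rightarrow> (int \<Rightarrow> int) \<Rightarrow> bool" where
  "solves a w \<longleftrightarrow> (\<forall>j. w (j + 1) = a j * w j - w (j - 1))"

lemma solvesD: "solves a w \<Longrightarrow> w (j + 1) = a j * w j - w (j - 1)"
  by (simp add: solves_def)

lemma solves_add: "solves a v \<Longrightarrow> solves a w \<Longrightarrow> solves a (\<lambda>j. v j + w j)"
  by (simp add: solves_def algebra_simps)

lemma solves_cmult: "solves a w \<Longrightarrow> solves a (\<lambda>j. c * w j)"
  by (simp add: solves_def right_diff_distrib)

lemma solves_shift:
  assumes "\<And>j. a (j + q) = a j" and "solves a w"
  shows "solves a (\<lambda>j. w (j + q))"
  unfolding solves_def
proof
  fix j :: int
  have "w (j + q + 1) = a (j + q) * w (j + q) - w (j + q - 1)" by (rule solvesD[OF assms(2)])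
  then show "w (j + 1 + q) = a j * w (j + q) - w (j - 1 + q)"
    by (simp add: assms(1) algebra_simps)
qed

lemma solves_unique:
  assumes "solves a v" "solves a w" and "v b = w b" "v (b + 1) = w (b + 1)"
  shows "v j = w j"
proof -
  have "v j = w j \<and> v (j + 1) = w (j + 1)"
  proof (induction j rule: int_induct[where k = b])
    case (step1 i)
    then show ?case using solvesD[OF assms(1), of "i + 1"] solvesD[OF assms(2), of "i + 1"] by simp
  next
    case (step2 i)
    have "v (i - 1) = a i * v i - v (i + 1)" "w (i - 1) = a i * w i - w (i + 1)"
      using solvesD[OF assms(1), of i] solvesD[OF assms(2), of i] by simp_all
    with step2 show ?case by simp
  qed (use assms in simp)
  then show ?thesis ..
qed

text \<open>The solution with prescribed values at 0 and 1: forwards on the naturals, and backwards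
  as the forward solution for the reflected sequence with start values w 0, w (-1).\<close>
fun rec_fwd :: "(int \<Rightarrow> int) \<Rightarrow> int \<Rightarrow> int \<Rightarrow> nat \<Rightarrow> int" where
  "rec_fwd a u v 0 = u"
| "rec_fwd a u v (Suc 0) = v"
| "rec_fwd a u v (Suc (Suc k)) = a (int k + 1) * rec_fwd a u v (Suc k) - rec_fwd a u v k"

definition rec_sol :: "(int \<Rightarrow> int) \<Rightarrow> int \<Rightarrow> int \<Rightarrow> int \<Rightarrow> int" where
  "rec_sol a u v j =
     (if 0 \<le> j then rec_fwd a u v (nat j) else rec_fwd (\<lambda>k. a (- k)) u (a 0 * u - v) (nat (- j)))"

lemma rec_sol_0 [simp]: "rec_sol a u v 0 = u"
  and rec_sol_1 [simp]: "rec_sol a u v 1 = v"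
  by (simp_all add: rec_sol_def)

lemma solves_rec_sol: "solves a (rec_sol a u v)"
  unfolding solves_def
proof
  fix j :: int
  consider "1 \<le> j" | "j = 0" | "j \<le> -1" by force
  then show "rec_sol a u v (j + 1) = a j * rec_sol a u v j - rec_sol a u v (j - 1)"
  proof cases
    case 1
    define k where "k = nat (j - 1)"
    have "j = int k + 1" using 1 by (simp add: k_def)
    then show ?thesis by (simp add: rec_sol_def nat_add_distrib)
  next
    case 2
    then show ?thesis by (simp add: rec_sol_def)
  next
    case 3
    define k where "k = nat (- j - 1)"
    have k: "j = - int k - 1" using 3 by (simp add: k_def)
    have neg: "rec_sol a u v (- int m) = rec_fwd (\<lambda>k. a (- k)) u (a 0 * u - v) m" for m
      by (cases m) (simp_all add: rec_sol_def nat_add_distrib)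
    have "j - 1 = - int (Suc (Suc k))" "j = - int (Suc k)" "j + 1 = - int k" using k by simp_all
    then show ?thesis by (simp only: neg) (simp add: algebra_simps)
  qed
qed

text \<open>cont a x y is the continuant of a (x+1), ..., a (y-1), extended to all pairs of integers. It is
  defined as the determinant of the fundamental system of solutions, so that the Pluecker
  relation becomes a ring identity.\<close>
definition cont :: "(int \<Rightarrow> int) \<Rightarrow> int \<Rightarrow> int \<Rightarrow> int" where
  "cont a x y = rec_sol a 1 0 x * rec_sol a 0 1 y - rec_sol a 0 1 x * rec_sol a 1 0 y"

lemma cont_self [simp]: "cont a x x = 0"
  by (simp add: cont_def)

lemma cont_swap: "cont a y x = - cont a x y"
  by (simp add: cont_def)

lemma cont_plucker: "cont a x z * cont a y w = cont a x y * cont a z w + cont a x w * cont a y z"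
  by (simp add: cont_def algebra_simps)

lemma solves_cont: "solves a (cont a x)"
proof -
  have "solves a (\<lambda>y. rec_sol a 1 0 x * rec_sol a 0 1 y + (- rec_sol a 0 1 x) * rec_sol a 1 0 y)"
    by (intro solves_add solves_cmult solves_rec_sol)
  then show ?thesis by (simp add: cont_def[abs_def])
qed

lemma cont_rec: "cont a x (y + 1) = a y * cont a x y - cont a x (y - 1)"
  by (rule solvesD[OF solves_cont])

lemma cont_rec_left: "cont a (x + 1) y = a x * cont a x y - cont a (x - 1) y"
  using cont_rec[of a y x] cont_swap[of a y] by simp

lemma cont_adjacent [simp]: "cont a x (x + 1) = 1"
proof -
  have step: "cont a (x - 1) x = cont a x (x + 1)" for x
    using cont_rec[of a x x] cont_swap[of a "x - 1" x] by simp
  show ?thesis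
  proof (induction x rule: int_induct[where k = 0])
    case (step1 x)
    then show ?case using step[of "x + 1"] by simp
  next
    case (step2 x)
    then show ?case using step[of x] by simp
  qed (simp add: cont_def)
qed

lemma cont_skip: "cont a (j - 1) (j + 1) = a j"
  using cont_rec[of a "j - 1" j] cont_adjacent[of a "j - 1"] by simp

lemma tame_ext_eq_cont: "tame_ext a x k = cont a x (x + int k)"
proof (induction a x k rule: tame_ext.induct)
  case (3 a x k)
  then show ?case using cont_rec[of a x "x + int k + 1"] by (simp add: algebra_simps)
qed simp_all

lemma cont_shift:
  assumes "\<And>j. a (j + q) = a j"
  shows "cont a (x + q) (y + q) = cont a x y"
proof -
  have "x + 1 + q = (x + q) + 1" by simp
  then have "cont a (x + q) (x + 1 + q) = cont a x (x + 1)" by (simp only: cont_adjacent)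
  then show ?thesis
    using solves_unique[where b = x and j = y,
        OF solves_shift[of a q, OF assms solves_cont[of a "x + q"]] solves_cont[of a x]] by simp
qed

text \<open>The left-hand side is the trace of the monodromy matrix over the period q, and cont_trace
  below is the Cayley-Hamilton identity for it.\<close>
lemma cont_trace_shift_invariant:
  assumes per: "\<And>j. a (j + q) = a j"
  shows "cont a x (x + q + 1) - cont a (x + 1) (x + q) = cont a 0 (q + 1) - cont a 1 q"
proof -
  have step: "cont a (x + 1) (x + 1 + q + 1) - cont a (x + 1 + 1) (x + 1 + q)
      = cont a x (x + q + 1) - cont a (x + 1) (x + q)" for x
  proof -
    have "cont a (x + 1) (x + q + 1 + 1) = a (x + 1) * cont a (x + 1) (x + q + 1) - cont a (x + 1) (x + q)"
      using cont_rec[of a "x + 1" "x + q + 1"] per[of "x + 1"] by (simp add: algebra_simps)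
    moreover have "cont a (x + 1 + 1) (x + q + 1) = a (x + 1) * cont a (x + 1) (x + q + 1) - cont a x (x + q + 1)"
      using cont_rec_left[of a "x + 1" "x + q + 1"] by simp
    ultimately show ?thesis by (simp add: algebra_simps)
  qed
  show ?thesis
  proof (induction x rule: int_induct[where k = 0])
    case (step1 x)
    then show ?case using step[of x] by simp
  next
    case (step2 x)
    then show ?case using step[of "x - 1"] by simp
  qed simp
qed

lemma cont_trace:
  assumes per: "\<And>j. a (j + q) = a j"
  shows "cont a x (y + q) + cont a x (y - q) = (cont a 0 (q + 1) - cont a 1 q) * cont a x y"
proof -
  define t where "t = cont a 0 (q + 1) - cont a 1 q"
  have per': "a (j + - q) = a j" for j
    using per[of "j - q"] by simp
  have "solves a (\<lambda>y. cont a x (y + q) + cont a x (y - q))"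
    using solves_add[OF solves_shift[of a q, OF per solves_cont] solves_shift[of a "- q", OF per' solves_cont]]
    by simp
  moreover have "solves a (\<lambda>y. t * cont a x y)"
    by (rule solves_cmult[OF solves_cont])
  moreover have "cont a x (x + q) + cont a x (x - q) = t * cont a x x"
    using cont_shift[of a q "x - q" x, OF per] cont_swap[of a x "x - q"] by simp
  moreover have "cont a x (x + 1 + q) + cont a x (x + 1 - q) = t * cont a x (x + 1)"
  proof -
    have "cont a x (x + 1 - q) = - cont a (x + 1) (x + q)"
      using cont_shift[of a q "x + 1 - q" x, OF per] cont_swap[of a x "x + 1 - q"] by simp
    moreover have "cont a x (x + 1 + q) = cont a x (x + q + 1)" by (simp add: ac_simps)
    ultimately show ?thesis using cont_trace_shift_invariant[of a q x, OF per] by (simp add: t_def)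
  qed
  ultimately show ?thesis
    using solves_unique[of a "\<lambda>y. cont a x (y + q) + cont a x (y - q)" "\<lambda>y. t * cont a x y" x y]
    by (simp add: t_def)
qed

lemma cont_period_multiples:
  assumes per: "\<And>j. a (j + q) = a j"
  shows "cont a x (int (m + 2) * q)
    = (cont a 0 (q + 1) - cont a 1 q) * cont a x (int (m + 1) * q) - cont a x (int m * q)"
proof -
  have "cont a x (int (m + 2) * q) = cont a x (int (m + 1) * q + q)"
    "cont a x (int m * q) = cont a x (int (m + 1) * q - q)"
    by (simp_all add: algebra_simps)
  then show ?thesis using cont_trace[of a q x "int (m + 1) * q", OF per] by simp
qed

section \<open>Finite frieze patterns\<close>

lemma min_period_of_period:
  fixes a :: "int \<Rightarrow> int"
  assumes "0 < P" and per: "\<And>i. a (i + int P) = a i"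
  shows min_period_pos: "0 < min_period a"
    and min_period_periodic: "\<And>i. a (i + int (min_period a)) = a i"
    and min_period_dvd: "min_period a dvd P"
proof -
  let ?period = "\<lambda>p. 0 < p \<and> (\<forall>i. a (i + int p) = a i)"
  have q: "?period (min_period a)"
    unfolding min_period_def by (rule LeastI[of ?period P]) (use assms in auto)
  then show "0 < min_period a" "\<And>i. a (i + int (min_period a)) = a i" by auto
  let ?q = "min_period a"
  have "a (i + int (P mod ?q)) = a i" for i
  proof -
    have "a (i + int (P mod ?q)) = a (i + int (P mod ?q) + int ?q * int (P div ?q))"
      using periodic_mult[of a "int ?q"] q by simp
    also have "i + int (P mod ?q) + int ?q * int (P div ?q) = i + int P"
      by (metis add.assoc mod_mult_div_eq of_nat_add of_nat_mult)
    finally show ?thesis using per by simp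
  qed
  moreover have "P mod ?q < ?q" using q by simp
  ultimately have "\<not> 0 < P mod ?q"
    using Least_le[of ?period "P mod ?q"] unfolding min_period_def by auto
  then show "min_period a dvd P" by auto
qed

lemma chebyshev_first_zero:
  fixes s :: "nat \<Rightarrow> int"
  assumes s0: "s 0 = 0" and rec: "\<And>m. s (m + 2) = t * s (m + 1) - s m"
    and pos: "\<And>m. 0 < m \<Longrightarrow> m < k \<Longrightarrow> 0 < s m"
    and zero: "s k = 0" and "2 \<le> k"
  shows "(k = 2 \<and> t = 0) \<or> (k = 3 \<and> t = 1)"
proof -
  have s2: "s 2 = t * s 1" and s3: "s 3 = t * s 2 - s 1"
    using rec[of 0] rec[of 1] s0 by (simp_all add: eval_nat_numeral)
  have s1: "0 < s 1" using pos[of 1] \<open>2 \<le> k\<close> by simp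
  consider "k = 2" | "k = 3" | "4 \<le> k" using \<open>2 \<le> k\<close> by linarith
  then show ?thesis
  proof cases
    case 1
    then show ?thesis using s1 s2 zero by simp
  next
    case 2
    have "0 < t" using pos[of 2] s1 s2 2 by (simp add: zero_less_mult_iff)
    moreover have "(t * t - 1) * s 1 = 0" using s2 s3 zero 2 by (simp add: algebra_simps)
    ultimately show ?thesis using s1 2 by (simp add: square_eq_1_iff)
  next
    case 3
    have "0 < t" using pos[of 2] s1 s2 3 by (simp add: zero_less_mult_iff)
    moreover have "t \<noteq> 1"
    proof
      assume "t = 1"
      then have "s 3 = 0" using s2 s3 by simp
      with pos[of 3] 3 show False by simp
    qed
    ultimately have t2: "2 \<le> t" by simp
    txt \<open>For t \<ge> 2 the sequence is nondecreasing, so it never returns to zero.\<close>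
    have "s 1 \<le> s m \<and> s m \<le> s (m + 1)" if "1 \<le> m" for m
      using that
    proof (induction m rule: dec_induct)
      case base
      have "1 * s 1 \<le> t * s 1" using s1 t2 by (intro mult_right_mono) auto
      then show ?case using s2 by (simp add: eval_nat_numeral)
    next
      case (step m)
      have "2 * s (m + 1) \<le> t * s (m + 1)" using step.IH s1 t2 by (intro mult_right_mono) auto
      then show ?case using step.IH rec[of m] by (simp add: algebra_simps)
    qed
    then have "s 1 \<le> s k" using 3 by simp
    then show ?thesis using s1 zero by simp
  qed
qed

locale frieze_strip =
  fixes M :: int and F :: "int \<Rightarrow> int \<Rightarrow> int"
  assumes diag: "F x x = 0" and adjacent: "F x (x + 1) = 1"
    and unimodular: "1 \<le> j - i \<Longrightarrow> j - i \<le> M \<Longrightarrow>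
      F i j * F (i + 1) (j + 1) - F (i + 1) j * F i (j + 1) = 1"
    and positive: "1 \<le> j - i \<Longrightarrow> j - i < M \<Longrightarrow> 0 < F i j"
begin

lemma quiddity_rec:
  assumes "1 \<le> j - i" "j - i \<le> M"
  shows "F i (j - 1) + F i (j + 1) = quiddity F j * F i j"
proof -
  have "i \<le> j - 1" using assms by simp
  then have "j - i \<le> M \<longrightarrow> F i (j - 1) + F i (j + 1) = quiddity F j * F i j"
  proof (induction i rule: int_le_induct)
    case base
    show ?case using diag[of "j - 1"] adjacent[of "j - 1"] by (simp add: quiddity_def)
  next
    case (step i)
    show ?case
    proof
      assume le: "j - (i - 1) \<le> M"
      have "F (i - 1) (j - 1) * F i j - F i (j - 1) * F (i - 1) j = 1"
        using unimodular[where i = "i - 1" and j = "j - 1"] le step.hyps by simp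
      moreover have "F (i - 1) j * F i (j + 1) - F i j * F (i - 1) (j + 1) = 1"
        using unimodular[where i = "i - 1" and j = j] le step.hyps by simp
      ultimately have "F i j * (F (i - 1) (j - 1) + F (i - 1) (j + 1))
          = F (i - 1) j * (F i (j - 1) + F i (j + 1))"
        by (simp add: algebra_simps)
      also have "\<dots> = F i j * (quiddity F j * F (i - 1) j)"
        using step.IH le by simp
      finally show "F (i - 1) (j - 1) + F (i - 1) (j + 1) = quiddity F j * F (i - 1) j"
        using positive[where i = i and j = j] step.hyps le by simp
    qed
  qed
  then show ?thesis using assms by simp
qed

lemma eq_cont:
  assumes "0 \<le> y - x" "y - x \<le> M + 1"
  shows "F x y = cont (quiddity F) x y"
proof -
  have pair: "x \<le> z \<longrightarrow> z \<le> x + M \<longrightarrow>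
      F x z = cont (quiddity F) x z \<and> F x (z + 1) = cont (quiddity F) x (z + 1)" for z
  proof (induction z rule: int_induct[where k = x])
    case base
    show ?case using diag[of x] adjacent[of x] by simp
  next
    case (step1 z)
    show ?case
    proof (intro impI)
      assume "x \<le> z + 1" "z + 1 \<le> x + M"
      then have "F x z + F x (z + 1 + 1) = quiddity F (z + 1) * F x (z + 1)"
        using quiddity_rec[where i = x and j = "z + 1"] step1.hyps by simp
      then show "F x (z + 1) = cont (quiddity F) x (z + 1)
          \<and> F x (z + 1 + 1) = cont (quiddity F) x (z + 1 + 1)"
        using step1 \<open>z + 1 \<le> x + M\<close> cont_rec[of "quiddity F" x "z + 1"] by simp
    qed
  qed simp
  then show ?thesis
    using assms pair[of y] pair[of "y - 1"] diag by (cases "y \<le> x + M") auto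
qed

end

lemma finite_frieze_boundary:
  assumes "finite_frieze N F"
  shows "F x x = 0" "F x (x + int N) = 0" "F x (x + 1) = 1" "F x (x + int N - 1) = 1"
  using assms unfolding finite_frieze_def by auto

lemma finite_frieze_pos: "finite_frieze N F \<Longrightarrow> 0 < y - x \<Longrightarrow> y - x < int N \<Longrightarrow> 0 < F x y"
  unfolding finite_frieze_def by auto

lemma finite_frieze_zero:
  assumes ff: "finite_frieze N F" and "\<not> (0 < y - x \<and> y - x < int N)"
  shows "F x y = 0"
proof -
  consider "y = x" | "y = x + int N" | "\<not> (0 \<le> y - x \<and> y - x \<le> int N)" using assms(2) by force
  then show ?thesis using ff unfolding finite_frieze_def by cases auto
qed

lemma finite_frieze_strip:
  assumes "finite_frieze N F"
  shows "frieze_strip (int N - 1) F"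
  using assms unfolding finite_frieze_def frieze_strip_def by auto

lemma finite_frieze_width_pos: "finite_frieze N F \<Longrightarrow> 0 < N"
  unfolding finite_frieze_def by (cases N) force+

lemma finite_frieze_eq_cont:
  assumes "finite_frieze N F" "0 \<le> y - x" "y - x \<le> int N"
  shows "F x y = cont (quiddity F) x y"
  using frieze_strip.eq_cont[OF finite_frieze_strip[OF assms(1)]] assms(2,3) by simp

lemma finite_frieze_cont_antiperiodic:
  assumes ff: "finite_frieze N F"
  shows "cont (quiddity F) (x + int N) y = - cont (quiddity F) x y"
proof -
  let ?a = "quiddity F"
  have "cont ?a x (x + int N) = 0"
    using finite_frieze_eq_cont[OF ff, where x = x and y = "x + int N"] finite_frieze_boundary(2)[OF ff]
    by simp
  moreover have "cont ?a (x + 1) (x + int N) = 1"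
    using finite_frieze_eq_cont[OF ff, where x = "x + 1" and y = "x + int N"] finite_frieze_width_pos[OF ff]
      finite_frieze_boundary(4)[OF ff, of "x + 1"]
    by simp
  ultimately show ?thesis
    using cont_plucker[of ?a x "x + int N" "x + 1" y] by simp
qed

lemma finite_frieze_quiddity_periodic:
  assumes ff: "finite_frieze N F"
  shows "quiddity F (j + int N) = quiddity F j"
proof -
  let ?a = "quiddity F"
  have "?a (j + int N) = cont ?a (j - 1 + int N) (j + 1 + int N)"
    using cont_skip[of ?a "j + int N"] by (simp add: algebra_simps)
  also have "\<dots> = cont ?a (j - 1) (j + 1)"
    using finite_frieze_cont_antiperiodic[OF ff, of "j - 1"] finite_frieze_cont_antiperiodic[OF ff, of "j + 1"]
      cont_swap[of ?a "j - 1" "j + 1 + int N"] cont_swap[of ?a "j - 1" "j + 1"] by simp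
  finally show ?thesis by (simp add: cont_skip)
qed

lemma principal_growth_eq_cont:
  assumes "0 < min_period (quiddity F)"
  shows "principal_growth F = cont (quiddity F) 0 (int (min_period (quiddity F)) + 1)
                              - cont (quiddity F) 1 (int (min_period (quiddity F)))"
  using assms by (simp add: principal_growth_def Let_def tame_ext_eq_cont of_nat_diff add.commute)

lemma finite_frieze_cont_pos:
  assumes "finite_frieze N F" "0 < y - x" "y - x < int N"
  shows "0 < cont (quiddity F) x y"
  using finite_frieze_eq_cont[OF assms(1), of y x] finite_frieze_pos[OF assms] assms(2,3) by simp

text \<open>By antiperiodicity, the monodromy over the full width N is -1.\<close>
lemma finite_frieze_monodromy_trace:
  assumes ff: "finite_frieze N F"
  shows "cont (quiddity F) 0 (int N + 1) - cont (quiddity F) 1 (int N) = -2"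
proof -
  let ?a = "quiddity F"
  have "cont ?a 0 (int N + 1) = -1"
    using finite_frieze_cont_antiperiodic[OF ff, of 1 0] cont_swap[of ?a 0 "int N + 1"] cont_swap[of ?a 0 1]
      cont_adjacent[of ?a 0]
    by (simp add: add.commute)
  moreover have "cont ?a 1 (int N) = 1"
    using finite_frieze_eq_cont[OF ff, where x = 1 and y = "int N"] finite_frieze_width_pos[OF ff]
      finite_frieze_boundary(4)[OF ff, of 1]
    by simp
  ultimately show ?thesis by simp
qed

lemma finite_frieze_growth_cases:
  assumes ff: "finite_frieze N F"
  defines "q \<equiv> min_period (quiddity F)"
  shows "(q = N \<and> principal_growth F = -2) \<or> (N = 2 * q \<and> principal_growth F = 0)
       \<or> (N = 3 * q \<and> principal_growth F = 1)"
proof -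
  let ?a = "quiddity F"
  let ?t = "principal_growth F"
  have N: "0 < N" by (rule finite_frieze_width_pos[OF ff])
  have q: "0 < q" "\<And>i. ?a (i + int q) = ?a i" "q dvd N"
    using min_period_of_period[of N ?a, OF N finite_frieze_quiddity_periodic[OF ff]] unfolding q_def by auto
  have t: "?t = cont ?a 0 (int q + 1) - cont ?a 1 (int q)"
    using principal_growth_eq_cont q(1) unfolding q_def by simp
  obtain k where k: "N = q * k" using q(3) by blast
  have "k \<noteq> 0" using k N by auto
  then consider "k = 1" | "2 \<le> k" by (cases "k = 1") auto
  then show ?thesis
  proof cases
    case 1
    then show ?thesis using t k finite_frieze_monodromy_trace[OF ff] by simp
  next
    case 2
    have "(k = 2 \<and> ?t = 0) \<or> (k = 3 \<and> ?t = 1)"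
    proof (rule chebyshev_first_zero[where s = "\<lambda>m. cont ?a 0 (int m * int q)"])
      show "cont ?a 0 (int (m + 2) * int q) = ?t * cont ?a 0 (int (m + 1) * int q) - cont ?a 0 (int m * int q)"
        for m
        using cont_period_multiples[where a = ?a and q = "int q" and x = 0 and m = m, OF q(2)] t by simp
      show "0 < cont ?a 0 (int m * int q)" if "0 < m" "m < k" for m
      proof -
        have "m * q < k * q" using that q(1) by simp
        then have "int m * int q < int N" using k by (simp add: mult.commute flip: of_nat_mult)
        then show ?thesis using finite_frieze_cont_pos[OF ff, of "int m * int q" 0] that q(1) by simp
      qed
      show "cont ?a 0 (int k * int q) = 0"
        using finite_frieze_eq_cont[OF ff, where x = 0 and y = "int N"] finite_frieze_boundary(2)[OF ff, of 0] k
        by (simp add: mult.commute)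
    qed (use 2 in simp_all)
    then show ?thesis using k by (elim disjE conjE) (simp_all add: mult.commute)
  qed
qed

section \<open>Friezes on the orbifold polygon\<close>

lemma lambda_p_eq: "p = 2 \<or> p = 3 \<Longrightarrow> lambda_p p = real p - 2"
  by (auto simp: lambda_p_def cos_60)

text \<open>The arc (v_i, v_j) lifts to the segment from i to the first integer after i lying over v_j.\<close>
definition star_of_frieze :: "nat \<Rightarrow> (int \<Rightarrow> int \<Rightarrow> int) \<Rightarrow> nat \<Rightarrow> nat \<Rightarrow> int" where
  "star_of_frieze n F i j =
     (if i < n \<and> j < n then F (int i) (int j + (if j \<le> i then int n else 0)) else 0)"

lemma star_of_frieze_nat:
  assumes "0 \<le> i" "i < int n" "0 \<le> j" "j < int n"
  shows "star_of_frieze n F (nat i) (nat j) = F i (j + (if j \<le> i then int n else 0))"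
  using assms by (simp add: star_of_frieze_def nat_less_iff nat_le_eq_zle)

lemma star_of_frieze_mod:
  assumes n: "0 < n" and per: "\<And>x y. F (x + int n) (y + int n) = F x y"
    and d: "0 < y - x" "y - x \<le> int n"
  shows "star_of_frieze n F (nat (x mod int n)) (nat (y mod int n)) = F x y"
proof -
  define i where "i = x mod int n"
  define d where "d = y - x"
  have i: "0 \<le> i" "i < int n" using n by (simp_all add: i_def)
  have "F x y = F (i + int n * (x div int n)) (i + d + int n * (x div int n))"
    by (simp add: i_def d_def algebra_simps)
  also have "\<dots> = F i (i + d)"
  proof -
    have "F (i + (z + int n)) (i + d + (z + int n)) = F (i + z) (i + d + z)" for z
      using per[of "i + z" "i + d + z"] by (simp add: add.assoc)
    from periodic_mult[of "\<lambda>z. F (i + z) (i + d + z)", OF this, of 0 "x div int n"]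
    show ?thesis by (simp add: add.assoc)
  qed
  finally have Fxy: "F x y = F i (i + d)" .
  have ymod: "y mod int n = (i + d) mod int n"
    by (simp add: i_def d_def mod_add_left_eq)
  show ?thesis
  proof (cases "i + d < int n")
    case True
    then have "y mod int n = i + d" using ymod i d by (simp add: d_def)
    then show ?thesis
      using Fxy True i d star_of_frieze_nat[of i n "i + d"] by (simp add: i_def[symmetric] d_def)
  next
    case False
    have "(i + d) mod int n = (i + d - int n) mod int n" by (simp add: minus_mod_self2)
    also have "\<dots> = i + d - int n"
      by (rule mod_pos_pos_trivial) (use False i d in \<open>simp_all add: d_def\<close>)
    finally have "(i + d) mod int n = i + d - int n" .
    then have "y mod int n = i + d - int n" using ymod by simp
    then show ?thesis
      using Fxy False i d star_of_frieze_nat[of i n "i + d - int n"] by (simp add: i_def[symmetric] d_def)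
  qed
qed

locale orbifold_quiddity =
  fixes p n :: nat and a :: "int \<Rightarrow> int"
  assumes order: "p = 2 \<or> p = 3" and n_pos: "0 < n"
    and periodic: "a (j + int n) = a j"
    and trace: "cont a 0 (int n + 1) - cont a 1 (int n) = int p - 2"
begin

lemma cont_trace_n: "cont a x (y + int n) + cont a x (y - int n) = (int p - 2) * cont a x y"
  using cont_trace[of a "int n" x y, OF periodic] trace by simp

lemma cont_periodic: "cont a (x + int n) (y + int n) = cont a x y"
  by (rule cont_shift[of a "int n", OF periodic])

lemma cont_antiperiodic: "cont a x (y + int p * int n) = - cont a x y"
  using order
proof
  assume "p = 2"
  then show ?thesis using cont_trace_n[of x "y + int n"] by (simp add: algebra_simps)
next
  assume "p = 3"
  moreover have "cont a x (y + 3 * int n) = cont a x (y + 2 * int n) - cont a x (y + int n)"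
    using cont_trace_n[of x "y + 2 * int n"] \<open>p = 3\<close> by (simp add: algebra_simps)
  moreover have "cont a x (y + 2 * int n) = cont a x (y + int n) - cont a x y"
    using cont_trace_n[of x "y + int n"] \<open>p = 3\<close> by (simp add: algebra_simps)
  ultimately show ?thesis by simp
qed

lemma star_of_frieze_cont:
  "0 < y - x \<Longrightarrow> y - x \<le> int n \<Longrightarrow>
    star_of_frieze n (cont a) (nat (x mod int n)) (nat (y mod int n)) = cont a x y"
  by (rule star_of_frieze_mod[of n "cont a", OF n_pos cont_periodic])

lemma star_curve_val_cont:
  assumes "x < y" "y < x + int p * int n"
  shows "star_curve_val p n (star_of_frieze n (cont a)) x y = cont a x y"
proof -
  let ?f = "star_of_frieze n (cont a)"
  have d: "(y - x) mod (int p * int n) = y - x" using assms by simp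
  consider "y - x \<le> int n" | "(int p - 1) * int n \<le> y - x" | "int n < y - x" "y - x < (int p - 1) * int n"
    by linarith
  then show ?thesis
  proof cases
    case 1
    then show ?thesis using star_of_frieze_cont[of y x] assms by (simp add: star_curve_val_def Let_def d)
  next
    case 2
    have "?f (nat (y mod int n)) (nat ((x + int p * int n) mod int n)) = cont a y (x + int p * int n)"
      by (rule star_of_frieze_cont) (use assms 2 in \<open>auto simp: algebra_simps\<close>)
    also have "\<dots> = cont a x y" using cont_antiperiodic[of y x] cont_swap[of a x y] by simp
    finally show ?thesis
      using 2 star_of_frieze_cont[of y x] assms by (simp add: star_curve_val_def Let_def d)
  next
    case 3
    \<comment> \<open>the image of the segment is a curve with one self-crossing\<close>
    then have p: "p = 3" using order by auto
    have "?f (nat (x mod int n)) (nat ((y - int n) mod int n)) = cont a x (y - int n)"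
      by (rule star_of_frieze_cont) (use 3 p in auto)
    moreover have "?f (nat (y mod int n)) (nat ((x + 2 * int n) mod int n)) = cont a y (x + 2 * int n)"
      by (rule star_of_frieze_cont) (use 3 p in auto)
    moreover have "cont a x (y - int n) + cont a y (x + 2 * int n) = cont a x y"
    proof -
      have "cont a (y - 2 * int n) x = cont a y (x + 2 * int n)"
        using cont_shift[of a "2 * int n" "y - 2 * int n" x] periodic_mult[of a "int n", OF periodic]
        by (simp add: mult.commute)
      then show ?thesis
        using cont_trace_n[of x "y - int n"] cont_swap[of a x "y - 2 * int n"] p by (simp add: algebra_simps)
    qed
    ultimately show ?thesis using 3 p by (simp add: star_curve_val_def Let_def d lambda_p_eq flip: of_int_add)
  qed
qed

lemma star_skein_cont: "star_skein p n (star_of_frieze n (cont a))"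
  unfolding star_skein_def
proof (intro allI impI)
  fix w x y z :: int
  assume "w < x \<and> x < y \<and> y < z \<and> z < w + int p * int n \<and>
    star_is_arc p n (y - w) \<and> star_is_arc p n (z - x)"
  let ?v = "star_curve_val p n (star_of_frieze n (cont a))"
  have "?v u v = cont a u v" if "u \<in> {w, x, y}" "v \<in> {x, y, z}" "u < v" for u v
    using that \<open>w < x \<and> _\<close> by (intro star_curve_val_cont) auto
  then show "?v w y * ?v x z = ?v w x * ?v y z + ?v w z * ?v x y"
    using cont_plucker[of a w y x z] \<open>w < x \<and> x < y \<and> y < z \<and> _\<close>
    by (simp flip: of_int_mult of_int_add)
qed

end

lemma star_of_frieze_cong:
  assumes "\<And>x y. 0 < y - x \<Longrightarrow> y - x \<le> int n \<Longrightarrow> F x y = G x y"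
  shows "star_of_frieze n F = star_of_frieze n G"
  using assms by (auto simp: star_of_frieze_def fun_eq_iff)

text \<open>The inverse construction: the value on a segment of P_{pn} is the value of its image in
  P_n^star, with the integer p - 2 in place of lambda_p.\<close>
definition frieze_of_star :: "nat \<Rightarrow> nat \<Rightarrow> (nat \<Rightarrow> nat \<Rightarrow> int) \<Rightarrow> int \<Rightarrow> int \<Rightarrow> int" where
  "frieze_of_star p n f x y =
     (if 0 < y - x \<and> y - x < int p * int n then
        (let i = nat (x mod int n); j = nat (y mod int n)
         in if y - x \<le> int n then f i j
            else if (int p - 1) * int n \<le> y - x then f j i
            else (int p - 2) * f i j + f j i)
      else 0)"

lemma frieze_of_star_out: "\<not> (0 < y - x \<and> y - x < int p * int n) \<Longrightarrow> frieze_of_star p n f x y = 0"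
  unfolding frieze_of_star_def by (rule if_not_P)

lemma frieze_of_star_star_curve_val:
  assumes "p = 2 \<or> p = 3" "0 < y - x" "y - x < int p * int n"
  shows "real_of_int (frieze_of_star p n f x y) = star_curve_val p n f x y"
proof -
  have "lambda_p p = real_of_int (int p - 2)" using lambda_p_eq[OF assms(1)] by simp
  moreover have "(y - x) mod (int p * int n) = y - x" using assms(2,3) by simp
  ultimately show ?thesis using assms(2,3) by (simp add: frieze_of_star_def star_curve_val_def Let_def)
qed

lemma finite_frieze_orbifold_quiddity:
  assumes p: "p = 2 \<or> p = 3" and n: "0 < n"
    and ff: "finite_frieze (p * n) F" and growth: "principal_growth F = int p - 2"
  shows "orbifold_quiddity p n (quiddity F)"
proof -
  let ?a = "quiddity F"
  have "min_period ?a = n"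
    using finite_frieze_growth_cases[OF ff] p growth by auto
  moreover have "0 < p * n" using p n by auto
  ultimately show ?thesis
    using p n growth principal_growth_eq_cont[of F]
      min_period_periodic[of "p * n" ?a, OF _ finite_frieze_quiddity_periodic[OF ff]]
    by (unfold_locales) auto
qed

context
  fixes p n :: nat and F :: "int \<Rightarrow> int \<Rightarrow> int"
  assumes p: "p = 2 \<or> p = 3" and n: "0 < n"
    and ff: "finite_frieze (p * n) F" and growth: "principal_growth F = int p - 2"
begin

interpretation orbifold_quiddity p n "quiddity F"
  by (rule finite_frieze_orbifold_quiddity[OF p n ff growth])

lemma star_of_frieze_eq_cont: "star_of_frieze n F = star_of_frieze n (cont (quiddity F))"
  by (rule star_of_frieze_cong) (use p in \<open>auto intro!: finite_frieze_eq_cont[OF ff]\<close>)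

lemma star_frieze_star_of_frieze: "star_frieze p n (star_of_frieze n F)"
  unfolding star_frieze_def
proof (intro conjI allI impI)
  show "star_of_frieze n F i j = 0" if "\<not> (i < n \<and> j < n)" for i j
    using that unfolding star_of_frieze_def by (rule if_not_P)
  show "star_of_frieze n F i (Suc i mod n) = 1" if "i < n" for i
  proof -
    have "nat (int i mod int n) = i" "nat ((int i + 1) mod int n) = Suc i mod n"
      using that by (simp_all add: nat_mod_as_int add.commute)
    then show ?thesis
      using star_of_frieze_cont[of "int i + 1" "int i"] n by (simp add: star_of_frieze_eq_cont)
  qed
  show "0 < star_of_frieze n F i j" if "i < n \<and> j < n" for i j
    using that p by (auto simp: star_of_frieze_def intro!: finite_frieze_pos[OF ff])
  show "star_skein p n (star_of_frieze n F)"
    unfolding star_of_frieze_eq_cont by (rule star_skein_cont)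
qed

lemma frieze_of_star_of_frieze: "frieze_of_star p n (star_of_frieze n F) = F"
proof (intro ext)
  fix x y
  show "frieze_of_star p n (star_of_frieze n F) x y = F x y"
  proof (cases "0 < y - x \<and> y - x < int p * int n")
    case True
    then have "real_of_int (frieze_of_star p n (star_of_frieze n F) x y) = cont (quiddity F) x y"
      using frieze_of_star_star_curve_val[OF p] star_curve_val_cont
      by (simp add: star_of_frieze_eq_cont)
    then show ?thesis using True finite_frieze_eq_cont[OF ff, of y x] by simp
  next
    case False
    then show ?thesis using frieze_of_star_out[OF False] finite_frieze_zero[OF ff] by simp
  qed
qed

end

lemma finite_frieze_of_cont:
  assumes N: "0 < N"
    and out: "\<And>x y. \<not> (0 < y - x \<and> y - x < int N) \<Longrightarrow> F x y = 0"
    and eq: "\<And>x y. 0 \<le> y - x \<Longrightarrow> y - x \<le> int N \<Longrightarrow> F x y = cont a x y"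
    and anti: "\<And>x y. cont a x (y + int N) = - cont a x y"
    and pos: "\<And>x y. 0 < y - x \<Longrightarrow> y - x < int N \<Longrightarrow> 0 < F x y"
  shows "finite_frieze N F"
  unfolding finite_frieze_def
proof (intro conjI allI impI)
  fix i j :: int
  show "F i j = 0" if "\<not> (0 \<le> j - i \<and> j - i \<le> int N)" using that by (intro out) auto
  show "F i i = 0" using eq[where x = i and y = i] by simp
  have "1 \<le> int N" using N by simp
  then show "F i (i + 1) = 1" using eq[where x = i and y = "i + 1"] by simp
  show "F i (i + int N) = 0" using eq[where x = i and y = "i + int N"] anti[of i i] by simp
  show "F i (i + int N - 1) = 1"
    using eq[where x = i and y = "i - 1 + int N"] anti[of i "i - 1"] cont_swap[of a "i - 1" i]
      cont_adjacent[of a "i - 1"] N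
    by (simp add: algebra_simps)
  show "0 < F i j" if "0 < j - i \<and> j - i < int N" using that pos by simp
  assume "i + 1 \<le> j \<and> j \<le> i + int N - 1"
  then show "F i j * F (i + 1) (j + 1) - F (i + 1) j * F i (j + 1) = 1"
    using eq[where x = i and y = j] eq[where x = "i + 1" and y = "j + 1"]
      eq[where x = "i + 1" and y = j] eq[where x = i and y = "j + 1"] cont_plucker[of a i j "i + 1" "j + 1"] cont_adjacent[of a i] cont_adjacent[of a j]
    by (simp add: algebra_simps)
qed

context
  fixes p n :: nat and f :: "nat \<Rightarrow> nat \<Rightarrow> int"
  assumes p: "p = 2 \<or> p = 3" and n: "0 < n" and sf: "star_frieze p n f"
begin

abbreviation lift :: "int \<Rightarrow> int \<Rightarrow> int" where
  "lift \<equiv> frieze_of_star p n f"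

lemma star_frieze_boundary_mod: "f (nat (x mod int n)) (nat ((x + 1) mod int n)) = 1"
proof -
  have "(x + 1) mod int n = (x mod int n + 1) mod int n" by (simp add: mod_add_left_eq)
  then have "nat ((x + 1) mod int n) = Suc (nat (x mod int n)) mod n"
    using n by (simp add: nat_mod_distrib nat_add_distrib)
  moreover have "nat (x mod int n) < n" using n by (simp add: nat_less_iff)
  ultimately show ?thesis using sf by (simp add: star_frieze_def)
qed

lemma frieze_of_star_short:
  assumes "0 < y - x" "y - x \<le> int n"
  shows "lift x y = f (nat (x mod int n)) (nat (y mod int n))"
proof -
  have "0 < y - x \<and> y - x < int p * int n" using assms p by auto
  then show ?thesis using assms by (simp add: frieze_of_star_def)
qed

lemma frieze_of_star_adjacent: "lift x (x + 1) = 1"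
  using frieze_of_star_short[where x = x and y = "x + 1"] n star_frieze_boundary_mod by simp

lemma frieze_of_star_pos:
  assumes "0 < y - x" "y - x < int p * int n"
  shows "0 < lift x y"
proof -
  have pos: "0 < f (nat (u mod int n)) (nat (v mod int n))" for u v
    using sf n by (simp add: star_frieze_def nat_less_iff)
  moreover have
    "0 < (int p - 2) * f (nat (u mod int n)) (nat (v mod int n)) + f (nat (v mod int n)) (nat (u mod int n))"
    for u v
    using p pos[of u v] pos[of v u] by (intro add_nonneg_pos mult_nonneg_nonneg) auto
  ultimately show ?thesis using assms by (simp add: frieze_of_star_def Let_def)
qed

lemma frieze_of_star_periodic: "lift (x + int n) (y + int n) = lift x y"
proof -
  have "y + int n - (x + int n) = y - x" by simp
  then show ?thesis unfolding frieze_of_star_def Let_def by (simp only: mod_add_self2)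
qed

lemma frieze_of_star_unimodular:
  assumes "1 \<le> j - i" "j - i \<le> int n"
  shows "lift i j * lift (i + 1) (j + 1) - lift (i + 1) j * lift i (j + 1) = 1"
proof (cases "j = i + 1")
  case True
  then show ?thesis
    using frieze_of_star_adjacent[of i] frieze_of_star_adjacent[of "i + 1"] frieze_of_star_out[of "i + 1" "i + 1"]
    by simp
next
  case False
  then have "int n + 1 < int p * int n" using assms p by auto
  then have real_lift: "star_curve_val p n f u v = real_of_int (lift u v)" if "u < v" "v \<le> u + int n + 1" for u v
    using frieze_of_star_star_curve_val[OF p, where x = u and y = v] that by simp
  have "\<forall>w x y z. w < x \<and> x < y \<and> y < z \<and> z < w + int p * int n \<and>
      star_is_arc p n (y - w) \<and> star_is_arc p n (z - x) \<longrightarrow>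
      star_curve_val p n f w y * star_curve_val p n f x z =
        star_curve_val p n f w x * star_curve_val p n f y z
        + star_curve_val p n f w z * star_curve_val p n f x y"
    using sf by (simp add: star_frieze_def star_skein_def)
  then have "star_curve_val p n f i j * star_curve_val p n f (i + 1) (j + 1) =
      star_curve_val p n f i (i + 1) * star_curve_val p n f j (j + 1)
      + star_curve_val p n f i (j + 1) * star_curve_val p n f (i + 1) j"
    using assms False \<open>int n + 1 < int p * int n\<close> by (auto simp: star_is_arc_def)
  then have "real_of_int (lift i j * lift (i + 1) (j + 1)) = real_of_int (1 + lift i (j + 1) * lift (i + 1) j)"
    using assms False by (simp add: real_lift frieze_of_star_adjacent)
  then have "lift i j * lift (i + 1) (j + 1) = 1 + lift i (j + 1) * lift (i + 1) j"
    by (simp only: of_int_eq_iff)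
  then show ?thesis by (simp add: mult.commute)
qed

lemma frieze_strip_frieze_of_star: "frieze_strip (int n) lift"
proof
  show "lift x x = 0" for x by (simp add: frieze_of_star_out)
  show "lift x (x + 1) = 1" for x by (rule frieze_of_star_adjacent)
  show "lift i j * lift (i + 1) (j + 1) - lift (i + 1) j * lift i (j + 1) = 1"
    if "1 \<le> j - i" "j - i \<le> int n" for i j
    using frieze_of_star_unimodular that by simp
  show "0 < lift i j" if "1 \<le> j - i" "j - i < int n" for i j
    using frieze_of_star_pos[where x = i and y = j] that p by auto
qed

lemma frieze_of_star_eq_cont_short:
  "0 \<le> y - x \<Longrightarrow> y - x \<le> int n + 1 \<Longrightarrow> lift x y = cont (quiddity lift) x y"
  using frieze_strip.eq_cont[OF frieze_strip_frieze_of_star] by simp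

lemma frieze_of_star_trace: "lift 0 (int n + 1) - lift 1 (int n) = int p - 2"
proof (cases "n = 1")
  case True
  have "f 0 0 = 1" using star_frieze_boundary_mod[of 0] True by simp
  then show ?thesis using p True by (auto simp: frieze_of_star_def)
next
  case False
  then have "1 mod int n = 1" "(int n + 1) mod int n = 1" using n by simp_all
  moreover have "f 0 1 = 1" using star_frieze_boundary_mod[of 0] \<open>1 mod int n = 1\<close> by simp
  ultimately show ?thesis using p n False by (auto simp: frieze_of_star_def)
qed

lemma orbifold_quiddity_frieze_of_star: "orbifold_quiddity p n (quiddity lift)"
proof
  show "quiddity lift (j + int n) = quiddity lift j" for j
    using frieze_of_star_periodic[of "j - 1" "j + 1"] by (simp add: quiddity_def algebra_simps)
  show "cont (quiddity lift) 0 (int n + 1) - cont (quiddity lift) 1 (int n) = int p - 2"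
    using frieze_of_star_trace frieze_of_star_eq_cont_short[where x = 0 and y = "int n + 1"]
      frieze_of_star_eq_cont_short[where x = 1 and y = "int n"] n by simp
qed (use p n in auto)

interpretation orbifold_quiddity p n "quiddity lift"
  by (rule orbifold_quiddity_frieze_of_star)

lemma star_of_frieze_of_star: "star_of_frieze n lift = f"
proof (intro ext)
  fix i j
  show "star_of_frieze n lift i j = f i j"
  proof (cases "i < n \<and> j < n")
    case True
    then show ?thesis
      using frieze_of_star_short[where x = "int i" and y = "int j + (if j \<le> i then int n else 0)"]
      by (simp add: star_of_frieze_def)
  next
    case False
    have "star_of_frieze n lift i j = 0" unfolding star_of_frieze_def using False by (rule if_not_P)
    moreover have "f i j = 0" using sf False by (simp add: star_frieze_def)
    ultimately show ?thesis by simp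
  qed
qed

lemma frieze_of_star_eq_cont:
  assumes "0 \<le> y - x" "y - x \<le> int p * int n"
  shows "lift x y = cont (quiddity lift) x y"
proof -
  have f: "f = star_of_frieze n (cont (quiddity lift))"
    using star_of_frieze_of_star star_of_frieze_cong[of n lift "cont (quiddity lift)"]
      frieze_of_star_eq_cont_short by simp
  consider "y = x" | "y = x + int p * int n" | "0 < y - x" "y - x < int p * int n" using assms by linarith
  then show ?thesis
  proof cases
    case 3
    then have "real_of_int (lift x y) = star_curve_val p n (star_of_frieze n (cont (quiddity lift))) x y"
      using frieze_of_star_star_curve_val[OF p] f by simp
    then show ?thesis using star_curve_val_cont 3 by simp
  qed (simp_all add: frieze_of_star_out cont_antiperiodic)
qed

lemma finite_frieze_frieze_of_star: "finite_frieze (p * n) lift"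
proof (rule finite_frieze_of_cont[where a = "quiddity lift"])
  show "0 < p * n" using p n by auto
  show "lift x y = 0" if "\<not> (0 < y - x \<and> y - x < int (p * n))" for x y
    using that by (simp add: frieze_of_star_out)
  show "lift x y = cont (quiddity lift) x y" if "0 \<le> y - x" "y - x \<le> int (p * n)" for x y
    using frieze_of_star_eq_cont that by simp
  show "cont (quiddity lift) x (y + int (p * n)) = - cont (quiddity lift) x y" for x y
    using cont_antiperiodic by simp
  show "0 < lift x y" if "0 < y - x" "y - x < int (p * n)" for x y
    using frieze_of_star_pos that by simp
qed

lemma principal_growth_frieze_of_star: "principal_growth lift = int p - 2"
proof -
  define q where "q = min_period (quiddity lift)"
  have q: "0 < q" "q dvd n" using min_period_pos min_period_dvd n periodic unfolding q_def by blast+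
  then obtain r where r: "n = q * r" by blast
  have "p * n = q * (p * r)" by (simp add: r)
  then have "(p * r = 1 \<and> principal_growth lift = -2) \<or> (p * r = 2 \<and> principal_growth lift = 0)
      \<or> (p * r = 3 \<and> principal_growth lift = 1)"
    using finite_frieze_growth_cases[OF finite_frieze_frieze_of_star] q(1) unfolding q_def[symmetric]
    by (metis mult.commute mult.right_neutral mult_left_cancel not_gr0)
  then show ?thesis using p by (auto; presburger)
qed

end

theorem star_of_frieze_bij:
  assumes p: "p = 2 \<or> p = 3" and n: "0 < n"
  shows "bij_betw (star_of_frieze n)
           {F. finite_frieze (p * n) F \<and> principal_growth F = int p - 2} {f. star_frieze p n f}"
proof (rule bij_betw_byWitness[where f' = "frieze_of_star p n"])
  show "\<forall>F \<in> {F. finite_frieze (p * n) F \<and> principal_growth F = int p - 2}.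
      frieze_of_star p n (star_of_frieze n F) = F"
    using frieze_of_star_of_frieze[OF p n] by blast
  show "\<forall>f \<in> {f. star_frieze p n f}. star_of_frieze n (frieze_of_star p n f) = f"
    using star_of_frieze_of_star[OF p n] by blast
  show "star_of_frieze n ` {F. finite_frieze (p * n) F \<and> principal_growth F = int p - 2}
      \<subseteq> {f. star_frieze p n f}"
    using star_frieze_star_of_frieze[OF p n] by blast
  show "frieze_of_star p n ` {f. star_frieze p n f}
      \<subseteq> {F. finite_frieze (p * n) F \<and> principal_growth F = int p - 2}"
    using finite_frieze_frieze_of_star[OF p n] principal_growth_frieze_of_star[OF p n] by blast
qed

theorem corollary4p32:
  fixes n :: nat
  assumes "n \<ge> 1"
  shows "(\<exists>g. bij_betw g {F. finite_frieze (2 * n) F \<and> principal_growth F = 0}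
                         {f. star_frieze 2 n f})
       \<and> (\<exists>g. bij_betw g {F. finite_frieze (3 * n) F \<and> principal_growth F = 1}
                         {f. star_frieze 3 n f})"
  using star_of_frieze_bij[of 2 n] star_of_frieze_bij[of 3 n] assms by auto

end
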